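(* Let $n,m\ge1$ be integers (not necessarily distinct). Then \[ \mathcal{R}_{\mathcal{BOOL}}(n,m)=\mathcal{R}_{\mathcal{IDM}}(n,m)=\mathcal{R}_{\mathcal{PO}}(n,m)=(n-1)(m-1)+1 . \]
   Context: For a commutative ring $R$ (with $1\ne0$), the idempotents graph $\mathrm{Idm}(R)$ is the simple undirected graph whose vertices are the idempotents of $R$, distinct $a,b$ adjacent iff $a\mid b$ or $b\mid a$. $\mathcal{IDM}$ is the class of all idempotents graphs of commutative rings, and $\mathcal{BOOL}\subseteq\mathcal{IDM}$ the class of idempotents graphs of Boolean rings. $\mathcal{PO}$ is the class of partial order graphs $G_A$ of posets $(A,\le)$ (distinct vertices adjacent iff comparable). For a class $\mathcal{C}$ of graphs, $\mathcal{R}_{\mathcal{C}}(n,m)$ is the minimal $r$ such that every induced subgraph with $r$ vertices of any graph in $\mathcal{C}$ contains either $K_n$ or an independent set of $m$ vertices. *)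

theory Defs
  imports Main "HOL-Algebra.Ring" "HOL-Algebra.Divisibility"
begin

definition is_clique :: "('v \<Rightarrow> 'v \<Rightarrow> bool) \<Rightarrow> 'v set \<Rightarrow> bool" where
  "is_clique E K \<longleftrightarrow> (\<forall>x\<in>K. \<forall>y\<in>K. x \<noteq> y \<longrightarrow> E x y)"

definition is_indep :: "('v \<Rightarrow> 'v \<Rightarrow> bool) \<Rightarrow> 'v set \<Rightarrow> bool" where
  "is_indep E I \<longleftrightarrow> (\<forall>x\<in>I. \<forall>y\<in>I. x \<noteq> y \<longrightarrow> \<not> E x y)"

definition ramsey_prop :: "'v set \<Rightarrow> ('v \<Rightarrow> 'v \<Rightarrow> bool) \<Rightarrow> nat \<Rightarrow> nat \<Rightarrow> nat \<Rightarrow> bool" where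
  "ramsey_prop V E n m r \<longleftrightarrow>
     (\<forall>S. S \<subseteq> V \<and> finite S \<and> card S = r \<longrightarrow>
        (\<exists>K\<subseteq>S. card K = n \<and> is_clique E K) \<or> (\<exists>I\<subseteq>S. card I = m \<and> is_indep E I))"

definition nontriv_cring :: "('a, 'b) ring_scheme \<Rightarrow> bool" where
  "nontriv_cring R \<longleftrightarrow> cring R \<and> \<one>\<^bsub>R\<^esub> \<noteq> \<zero>\<^bsub>R\<^esub>"

definition boolean_ring :: "('a, 'b) ring_scheme \<Rightarrow> bool" where
  "boolean_ring R \<longleftrightarrow> nontriv_cring R \<and> (\<forall>x\<in>carrier R. x \<otimes>\<^bsub>R\<^esub> x = x)"

definition idm_verts :: "('a, 'b) ring_scheme \<Rightarrow> 'a set" where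
  "idm_verts R = {a \<in> carrier R. a \<otimes>\<^bsub>R\<^esub> a = a}"

definition idm_adj :: "('a, 'b) ring_scheme \<Rightarrow> 'a \<Rightarrow> 'a \<Rightarrow> bool" where
  "idm_adj R a b \<longleftrightarrow> a \<noteq> b \<and> (a divides\<^bsub>R\<^esub> b \<or> b divides\<^bsub>R\<^esub> a)"

definition po_adj :: "'a rel \<Rightarrow> 'a \<Rightarrow> 'a \<Rightarrow> bool" where
  "po_adj ord_rel a b \<longleftrightarrow> a \<noteq> b \<and> ((a, b) \<in> ord_rel \<or> (b, a) \<in> ord_rel)"

end

theory Submission
  imports Defs
begin

text \<open>The idempotents of a commutative ring are partially ordered by divisibility (if a and b
  divide each other then a = ab = b), and Idm(R) is the comparability graph of this order.
  By Mirsky's theorem a poset without a chain of n elements is covered by n - 1 antichains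
  (peel off the minimal elements n - 1 times), so (n - 1)(m - 1) + 1 elements force a chain of
  n or an antichain of m elements. The bound is attained by m - 1 disjoint chains of n - 1
  elements; mapping each element to its down-set embeds any poset into the Boolean ring of
  all subsets, where divisibility is reverse inclusion.\<close>

lemma is_clique_image_iff:
  assumes "inj_on f K" and "\<And>x y. x \<in> K \<Longrightarrow> y \<in> K \<Longrightarrow> E' x y \<longleftrightarrow> E (f x) (f y)"
  shows "is_clique E (f ` K) \<longleftrightarrow> is_clique E' K"
  using assms unfolding is_clique_def by (auto simp: inj_on_eq_iff)

lemma is_indep_image_iff:
  assumes "inj_on f I" and "\<And>x y. x \<in> I \<Longrightarrow> y \<in> I \<Longrightarrow> E' x y \<longleftrightarrow> E (f x) (f y)"
  shows "is_indep E (f ` I) \<longleftrightarrow> is_indep E' I"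
  using assms unfolding is_indep_def by (auto simp: inj_on_eq_iff)

lemma ramsey_prop_induced_subgraph:
  assumes "ramsey_prop V E n m k" and "inj_on f A" and "f ` A \<subseteq> V"
    and adj: "\<And>x y. x \<in> A \<Longrightarrow> y \<in> A \<Longrightarrow> E' x y \<longleftrightarrow> E (f x) (f y)"
  shows "ramsey_prop A E' n m k"
  unfolding ramsey_prop_def
proof (intro allI impI, elim conjE)
  fix S assume S: "S \<subseteq> A" "finite S" "card S = k"
  have inj: "\<And>T. T \<subseteq> S \<Longrightarrow> inj_on f T" using \<open>inj_on f A\<close> S(1) inj_on_subset by blast
  have adj_S: "\<And>T x y. T \<subseteq> S \<Longrightarrow> x \<in> T \<Longrightarrow> y \<in> T \<Longrightarrow> E' x y \<longleftrightarrow> E (f x) (f y)"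
    using adj S(1) by blast
  have "f ` S \<subseteq> V" "card (f ` S) = k" using S \<open>f ` A \<subseteq> V\<close> inj by (auto simp: card_image)
  then have "(\<exists>K\<subseteq>f ` S. card K = n \<and> is_clique E K) \<or> (\<exists>I\<subseteq>f ` S. card I = m \<and> is_indep E I)"
    using assms(1) S(2) unfolding ramsey_prop_def by blast
  then show "(\<exists>K\<subseteq>S. card K = n \<and> is_clique E' K) \<or> (\<exists>I\<subseteq>S. card I = m \<and> is_indep E' I)"
    unfolding subset_image_iff
    using inj adj_S is_clique_image_iff[of f _ E' E] is_indep_image_iff[of f _ E' E]
    by (metis card_image)
qed

lemma not_ramsey_prop:
  assumes "k \<le> card V"
    and "\<And>K. K \<subseteq> V \<Longrightarrow> is_clique E K \<Longrightarrow> card K \<noteq> n"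
    and "\<And>I. I \<subseteq> V \<Longrightarrow> is_indep E I \<Longrightarrow> card I \<noteq> m"
  shows "\<not> ramsey_prop V E n m k"
proof -
  obtain S where "S \<subseteq> V" "card S = k" "finite S"
    using assms(1) by (rule obtain_subset_with_card_n)
  then show ?thesis
    using assms(2,3) unfolding ramsey_prop_def by (metis order_trans)
qed

lemma partial_order_chain_has_least:
  assumes po: "partial_order_on A r" and "K \<subseteq> A" "finite K" "K \<noteq> {}"
    and chain: "is_clique (po_adj r) K"
  shows "\<exists>k\<in>K. \<forall>c\<in>K. (k, c) \<in> r"
  using assms(3,4,2,5)
proof (induction K rule: finite_ne_induct)
  case (singleton x)
  then show ?case using po by (auto simp: partial_order_on_def preorder_on_def refl_on_def)
next
  case (insert x F)
  then obtain k where k: "k \<in> F" "\<forall>c\<in>F. (k, c) \<in> r" by (auto simp: is_clique_def)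
  have "refl_on A r" "trans r" using po by (simp_all add: partial_order_on_def preorder_on_def)
  show ?case
  proof (cases "(x, k) \<in> r")
    case True
    then have "\<forall>c\<in>insert x F. (x, c) \<in> r"
      using k insert.prems(1) \<open>refl_on A r\<close> \<open>trans r\<close> by (auto simp: refl_on_def dest: transD)
    then show ?thesis by blast
  next
    case False
    then have "(k, x) \<in> r"
      using insert.hyps(3) insert.prems(2) k(1) by (auto simp: is_clique_def po_adj_def)
    then show ?thesis using k by blast
  qed
qed

lemma partial_order_chain_or_antichain:
  assumes po: "partial_order_on A r" and "S \<subseteq> A" "finite S" "(n - 1) * (m - 1) < card S"
  shows "(\<exists>K\<subseteq>S. card K = n \<and> is_clique (po_adj r) K) \<or> (\<exists>I\<subseteq>S. card I = m \<and> is_indep (po_adj r) I)"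
  using assms(2-)
proof (induction n arbitrary: S)
  case 0
  then show ?case by (auto simp: is_clique_def)
next
  case (Suc n)
  show ?case
  proof (cases "n = 0")
    case True
    obtain x where "x \<in> S" using Suc.prems(3) by fastforce
    then have "{x} \<subseteq> S \<and> card {x} = Suc n \<and> is_clique (po_adj r) {x}"
      using True by (simp add: is_clique_def)
    then show ?thesis by blast
  next
    case False
    define M where "M = {x \<in> S. \<forall>y\<in>S. (y, x) \<in> r \<longrightarrow> y = x}"
    have "M \<subseteq> S" by (auto simp: M_def)
    have M_indep: "is_indep (po_adj r) M" by (auto simp: M_def is_indep_def po_adj_def)
    show ?thesis
    proof (cases "m \<le> card M")
      case True
      then obtain I where "I \<subseteq> M" "card I = m" by (metis obtain_subset_with_card_n)
      moreover have "is_indep (po_adj r) I" using M_indep \<open>I \<subseteq> M\<close> by (auto simp: is_indep_def)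
      ultimately show ?thesis using \<open>M \<subseteq> S\<close> by blast
    next
      case False
      have "card (S - M) = card S - card M"
        using \<open>M \<subseteq> S\<close> Suc.prems(2) by (simp add: card_Diff_subset finite_subset)
      moreover have "n * (m - 1) = (n - 1) * (m - 1) + (m - 1)"
        using \<open>n \<noteq> 0\<close> by (cases n) simp_all
      moreover have "n * (m - 1) < card S" using Suc.prems(3) by simp
      ultimately have "(n - 1) * (m - 1) < card (S - M)"
        using False by linarith
      then consider
          (chain) K where "K \<subseteq> S - M" "card K = n" "is_clique (po_adj r) K"
        | (antichain) I where "I \<subseteq> S - M" "card I = m" "is_indep (po_adj r) I"
        using Suc.IH[of "S - M"] Suc.prems(1,2) by blast
      then show ?thesis
      proof cases
        case chain
        then have "K \<subseteq> A" "finite K" "K \<noteq> {}"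
          using Suc.prems(1,2) \<open>n \<noteq> 0\<close> finite_subset by fastforce+
        then obtain k where k: "k \<in> K" "\<forall>c\<in>K. (k, c) \<in> r"
          using partial_order_chain_has_least[OF po] chain(3) by blast
        then obtain y where y: "y \<in> S" "(y, k) \<in> r" "y \<noteq> k"
          using chain(1) by (auto simp: M_def)
        have "antisym r" "trans r" using po by (simp_all add: partial_order_on_def preorder_on_def)
        have "y \<notin> K" using k y antisymD[OF \<open>antisym r\<close>] by blast
        have "\<forall>c\<in>K. (y, c) \<in> r" using k y transD[OF \<open>trans r\<close>] by blast
        then have "is_clique (po_adj r) (insert y K)"
          using chain(3) \<open>y \<notin> K\<close> unfolding is_clique_def po_adj_def by blast
        moreover have "insert y K \<subseteq> S" "card (insert y K) = Suc n"
          using chain(1,2) y(1) \<open>y \<notin> K\<close> \<open>finite K\<close> by auto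
        ultimately show ?thesis by blast
      next
        case antichain
        then show ?thesis by blast
      qed
    qed
  qed
qed

theorem ramsey_prop_partial_order:
  assumes "partial_order_on A r"
  shows "ramsey_prop A (po_adj r) n m ((n - 1) * (m - 1) + 1)"
  using partial_order_chain_or_antichain[OF assms] by (simp add: ramsey_prop_def)

lemma (in monoid) idempotent_divides_mult_eq:
  assumes "x \<in> carrier G" "x \<otimes> x = x" "x divides y"
  shows "x \<otimes> y = y"
proof -
  obtain c where "c \<in> carrier G" "y = x \<otimes> c" using \<open>x divides y\<close> by blast
  then show ?thesis using assms(1,2) by (simp flip: m_assoc)
qed

lemma partial_order_on_idm_divides:
  assumes "cring R"
  shows "partial_order_on (idm_verts R) (relation_of (\<lambda>a b. a divides\<^bsub>R\<^esub> b) (idm_verts R))"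
proof -
  interpret cring R by (rule assms)
  show ?thesis
  proof (rule partial_order_on_relation_ofI)
    show "a divides\<^bsub>R\<^esub> a" if "a \<in> idm_verts R" for a
      using that by (simp add: idm_verts_def)
    show "a divides\<^bsub>R\<^esub> c" if "a \<in> idm_verts R" "a divides\<^bsub>R\<^esub> b" "b divides\<^bsub>R\<^esub> c" for a b c
      using that divides_trans by (auto simp: idm_verts_def)
    show "a = b" if "a \<in> idm_verts R" "b \<in> idm_verts R"
      "a divides\<^bsub>R\<^esub> b" "b divides\<^bsub>R\<^esub> a" for a b
    proof -
      have "a = b \<otimes>\<^bsub>R\<^esub> a"
        using idempotent_divides_mult_eq that(2,4) by (simp add: idm_verts_def)
      also have "\<dots> = a \<otimes>\<^bsub>R\<^esub> b" using that(1,2) by (simp add: idm_verts_def m_comm)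
      also have "\<dots> = b"
        using idempotent_divides_mult_eq that(1,3) by (simp add: idm_verts_def)
      finally show ?thesis .
    qed
  qed
qed

theorem ramsey_prop_idm:
  assumes "cring R"
  shows "ramsey_prop (idm_verts R) (idm_adj R) n m ((n - 1) * (m - 1) + 1)"
proof (rule ramsey_prop_induced_subgraph)
  let ?r = "relation_of (\<lambda>a b. a divides\<^bsub>R\<^esub> b) (idm_verts R)"
  show "ramsey_prop (idm_verts R) (po_adj ?r) n m ((n - 1) * (m - 1) + 1)"
    using partial_order_on_idm_divides[OF assms] by (rule ramsey_prop_partial_order)
  show "idm_adj R x y \<longleftrightarrow> po_adj ?r (id x) (id y)" if "x \<in> idm_verts R" "y \<in> idm_verts R" for x y
    using that by (auto simp: idm_adj_def po_adj_def relation_of_def)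
qed simp_all

definition powerset_ring :: "'a set ring" where
  "powerset_ring =
     \<lparr>carrier = UNIV, monoid.mult = (\<inter>), one = UNIV, zero = {}, add = (\<lambda>a b. (a - b) \<union> (b - a))\<rparr>"

lemma cring_powerset_ring: "cring (powerset_ring :: 'a set ring)"
proof -
  have "x \<oplus>\<^bsub>powerset_ring\<^esub> x = \<zero>\<^bsub>powerset_ring\<^esub>" for x :: "'a set"
    by (simp add: powerset_ring_def)
  then show ?thesis
    by (intro cringI abelian_groupI comm_monoidI) (auto simp: powerset_ring_def)
qed

lemma boolean_ring_powerset_ring: "boolean_ring (powerset_ring :: 'a set ring)"
  using cring_powerset_ring by (auto simp: boolean_ring_def nontriv_cring_def powerset_ring_def)

lemma divides_powerset_ring_iff: "a divides\<^bsub>powerset_ring\<^esub> b \<longleftrightarrow> b \<subseteq> a"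
  unfolding factor_def by (auto simp: powerset_ring_def)

lemma idm_verts_powerset_ring: "idm_verts powerset_ring = UNIV"
  by (auto simp: idm_verts_def powerset_ring_def)

lemma ramsey_prop_partial_order_if_idm_powerset_ring:
  fixes r :: "'a rel"
  assumes "partial_order_on A r"
    and "ramsey_prop (idm_verts powerset_ring) (idm_adj (powerset_ring :: 'a set ring)) n m k"
  shows "ramsey_prop A (po_adj r) n m k"
proof (rule ramsey_prop_induced_subgraph[OF assms(2), where f = "\<lambda>x. {y. (y, x) \<in> r}"])
  have "refl_on A r" "trans r" "antisym r"
    using assms(1) by (simp_all add: partial_order_on_def preorder_on_def)
  then have down_subset_iff: "{z. (z, x) \<in> r} \<subseteq> {z. (z, y) \<in> r} \<longleftrightarrow> (x, y) \<in> r"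
    if "x \<in> A" for x y
    using that by (auto simp: refl_on_def dest: transD)
  show "inj_on (\<lambda>x. {y. (y, x) \<in> r}) A"
    using down_subset_iff \<open>antisym r\<close> by (intro inj_onI) (metis antisymD subset_refl)
  then show "po_adj r x y \<longleftrightarrow> idm_adj powerset_ring {z. (z, x) \<in> r} {z. (z, y) \<in> r}"
    if "x \<in> A" "y \<in> A" for x y
    using that down_subset_iff[of x y] down_subset_iff[of y x]
    by (auto simp: po_adj_def idm_adj_def divides_powerset_ring_iff inj_on_eq_iff
        dest: antisymD[OF \<open>antisym r\<close>])
qed (simp add: idm_verts_powerset_ring)

definition block_chains :: "nat \<Rightarrow> nat \<Rightarrow> nat rel" where
  "block_chains d k = relation_of (\<lambda>x y. x div d = y div d \<and> x \<le> y) {..<d * k}"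

lemma partial_order_block_chains: "partial_order_on {..<d * k} (block_chains d k)"
  unfolding block_chains_def by (rule partial_order_on_relation_ofI) auto

lemma po_adj_block_chains:
  assumes "x < d * k" "y < d * k" "x \<noteq> y"
  shows "po_adj (block_chains d k) x y \<longleftrightarrow> x div d = y div d"
  using assms by (auto simp: po_adj_def block_chains_def relation_of_def)

lemma not_ramsey_prop_block_chains:
  assumes "j \<le> d * k"
  shows "\<not> ramsey_prop {..<d * k} (po_adj (block_chains d k)) (d + 1) (k + 1) j"
proof (rule not_ramsey_prop)
  show "j \<le> card {..<d * k}" using assms by simp
next
  fix K assume K: "K \<subseteq> {..<d * k}" "is_clique (po_adj (block_chains d k)) K"
  show "card K \<noteq> d + 1"
  proof (cases "K = {}")
    case False
    then obtain x where "x \<in> K" by blast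
    then have "d > 0" using K(1) by (cases "d = 0") auto
    have "K \<subseteq> (\<lambda>i. x div d * d + i) ` {..<d}"
    proof
      fix y assume "y \<in> K"
      then have "y div d = x div d"
        using K \<open>x \<in> K\<close> po_adj_block_chains[of y d k x] by (auto simp: is_clique_def)
      then have "y = x div d * d + y mod d" by (metis div_mult_mod_eq)
      then show "y \<in> (\<lambda>i. x div d * d + i) ` {..<d}"
        using \<open>d > 0\<close> by (intro image_eqI[of _ _ "y mod d"]) auto
    qed
    then have "card K \<le> card ((\<lambda>i. x div d * d + i) ` {..<d})" by (intro card_mono) auto
    also have "\<dots> \<le> d" using card_image_le[of "{..<d}"] by simp
    finally show ?thesis by simp
  qed simp
next
  fix I assume I: "I \<subseteq> {..<d * k}" "is_indep (po_adj (block_chains d k)) I"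
  have "inj_on (\<lambda>x. x div d) I"
  proof (rule inj_onI, rule ccontr)
    fix x y assume "x \<in> I" "y \<in> I" "x div d = y div d" "x \<noteq> y"
    then show False using I po_adj_block_chains[of x d k y] unfolding is_indep_def by blast
  qed
  moreover have "(\<lambda>x. x div d) ` I \<subseteq> {..<k}"
  proof (rule image_subsetI)
    fix x assume "x \<in> I"
    then have "x < k * d" using I(1) by (auto simp: mult.commute)
    then show "x div d \<in> {..<k}" using less_mult_imp_div_less by simp
  qed
  ultimately have "card I \<le> card {..<k}" by (intro card_inj_on_le) auto
  then show "card I \<noteq> k + 1" by simp
qed

theorem theorem3p23:
  fixes n m :: nat
  assumes "n \<ge> 1" and "m \<ge> 1"
  shows
   "(\<forall>R :: ('a, 'b) ring_scheme. boolean_ring R \<longrightarrow>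
        ramsey_prop (idm_verts R) (idm_adj R) n m ((n - 1) * (m - 1) + 1))
    \<and> (\<forall>r < (n - 1) * (m - 1) + 1. \<exists>R :: nat set ring. boolean_ring R \<and>
        \<not> ramsey_prop (idm_verts R) (idm_adj R) n m r)
    \<and> (\<forall>R :: ('c, 'd) ring_scheme. nontriv_cring R \<longrightarrow>
        ramsey_prop (idm_verts R) (idm_adj R) n m ((n - 1) * (m - 1) + 1))
    \<and> (\<forall>r < (n - 1) * (m - 1) + 1. \<exists>R :: nat set ring. nontriv_cring R \<and>
        \<not> ramsey_prop (idm_verts R) (idm_adj R) n m r)
    \<and> (\<forall>(A :: 'e set) ord_rel. partial_order_on A ord_rel \<longrightarrow>
        ramsey_prop A (po_adj ord_rel) n m ((n - 1) * (m - 1) + 1))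
    \<and> (\<forall>r < (n - 1) * (m - 1) + 1. \<exists>(A :: nat set) ord_rel. partial_order_on A ord_rel \<and>
        \<not> ramsey_prop A (po_adj ord_rel) n m r)"
proof (intro conjI allI impI)
  show "ramsey_prop (idm_verts R) (idm_adj R) n m ((n - 1) * (m - 1) + 1)"
    if "boolean_ring R" for R :: "('a, 'b) ring_scheme"
    using that by (intro ramsey_prop_idm) (simp add: boolean_ring_def nontriv_cring_def)
  show "ramsey_prop (idm_verts R) (idm_adj R) n m ((n - 1) * (m - 1) + 1)"
    if "nontriv_cring R" for R :: "('c, 'd) ring_scheme"
    using that by (intro ramsey_prop_idm) (simp add: nontriv_cring_def)
  show "ramsey_prop A (po_adj r) n m ((n - 1) * (m - 1) + 1)"
    if "partial_order_on A r" for A :: "'e set" and r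
    using that by (rule ramsey_prop_partial_order)
next
  fix j assume "j < (n - 1) * (m - 1) + 1"
  let ?A = "{..<(n - 1) * (m - 1)}" and ?r = "block_chains (n - 1) (m - 1)"
  have po: "partial_order_on ?A ?r" by (rule partial_order_block_chains)
  have po_lower: "\<not> ramsey_prop ?A (po_adj ?r) n m j"
    using not_ramsey_prop_block_chains[of j "n - 1" "m - 1"] \<open>j < _\<close> assms by simp
  have "\<not> ramsey_prop (idm_verts powerset_ring) (idm_adj (powerset_ring :: nat set ring)) n m j"
    using po_lower ramsey_prop_partial_order_if_idm_powerset_ring[OF po] by blast
  then show "\<exists>R :: nat set ring. boolean_ring R \<and> \<not> ramsey_prop (idm_verts R) (idm_adj R) n m j"
    and "\<exists>R :: nat set ring. nontriv_cring R \<and> \<not> ramsey_prop (idm_verts R) (idm_adj R) n m j"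
    using boolean_ring_powerset_ring by (auto simp: boolean_ring_def)
  show "\<exists>(A :: nat set) ord_rel. partial_order_on A ord_rel \<and> \<not> ramsey_prop A (po_adj ord_rel) n m j"
    using po po_lower by blast
qed

end
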